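(* Let \(k\le s\le t\) be non-negative integers, and let \(J=(j_0<\dots<j_{s-1})\) and \(K=(k_0<\dots<k_{t-1})\) be strictly increasing sequences of non-negative integers such that \(k_{t-s+p}\ge j_p\) for \(p=0,\dots,s-1\). Then \(N_k(K)\ge N_k(J)\), and the inequality is strict if \(K\ne J\).
   Context: For a strictly increasing sequence \(J=(j_0<\dots<j_{r-1})\) of non-negative integers of length \(r\ge k\), \(N_k(J)=r(r-k)+\sum_{q=0}^{r-1}(j_q-q)\). *)

theory Defs
  imports Main
begin

text \<open>A strictly increasing sequence J = (j_0 < ... < j_{r-1}) of non-negative integers
  is represented as a list of naturals with sorted_wrt (<).\<close>

definition Nk :: "nat \<Rightarrow> nat list \<Rightarrow> int" where
  "Nk k J = int (length J) * (int (length J) - int k)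
            + (\<Sum>q<length J. int (J ! q) - int q)"

end

theory Submission
  imports Defs
begin

text \<open>Write \<open>d = t - s\<close> and compare both \<open>J\<close> and \<open>K\<close> with the tail \<open>L\<close> of \<open>K\<close> of length \<open>s\<close>.
  Since \<open>J\<close> and \<open>L\<close> have the same length, \<open>N\<^sub>k(L) - N\<^sub>k(J) = \<Sum>\<^sub>p (l\<^sub>p - j\<^sub>p) \<ge> 0\<close>, with
  equality only if \<open>L = J\<close>. Removing the first \<open>d\<close> entries of \<open>K\<close> lowers \<open>N\<^sub>k\<close> by exactly
  \<open>d(t - k) + \<Sum>\<^sub>q\<^sub><\<^sub>d (k\<^sub>q - q)\<close>; here \<open>k\<^sub>q \<ge> q\<close> by strict monotonicity and \<open>t - k \<ge> d\<close>,
  so the drop is at least \<open>d\<^sup>2\<close>, which is positive unless \<open>K = L\<close>.\<close>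

lemma Nk_eq_Nk_drop:
  assumes "d \<le> length K"
  shows "Nk k K = Nk k (drop d K) + int d * (int (length K) - int k)
                  + (\<Sum>q<d. int (K ! q) - int q)"
proof -
  obtain s where len: "length K = d + s"
    using assms le_Suc_ex by blast
  have "(\<Sum>q<d + s. int (K ! q) - int q)
        = (\<Sum>q<d. int (K ! q) - int q) + (\<Sum>p<s. int (K ! (d + p)) - int (d + p))"
    by (induction s) auto
  also have "(\<Sum>p<s. int (K ! (d + p)) - int (d + p))
        = (\<Sum>p<s. int (drop d K ! p) - int p) - int s * int d"
    using len by (simp add: sum_subtractf sum.distrib)
  finally show ?thesis
    unfolding Nk_def using len by (simp add: algebra_simps)
qed

lemma Nk_drop_le:
  assumes "sorted_wrt (<) K" and "k + d \<le> length K"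
  shows "Nk k (drop d K) + int d * int d \<le> Nk k K"
proof -
  have "0 \<le> (\<Sum>q<d. int (K ! q) - int q)"
    using sorted_wrt_less_idx[OF assms(1)] assms(2) by (intro sum_nonneg) fastforce
  moreover have "int d * int d \<le> int d * (int (length K) - int k)"
    using assms(2) by (intro mult_left_mono) auto
  ultimately show ?thesis
    using Nk_eq_Nk_drop[of d K k] assms(2) by linarith
qed

lemma Nk_diff_same_length:
  assumes "length L = length J"
  shows "Nk k L - Nk k J = (\<Sum>p<length J. int (L ! p) - int (J ! p))"
  unfolding Nk_def using assms by (simp add: sum_subtractf)

lemma Nk_le_pointwise:
  assumes "length L = length J" and "\<forall>p<length J. J ! p \<le> L ! p"
  shows "Nk k J \<le> Nk k L"
proof -
  have "0 \<le> (\<Sum>p<length J. int (L ! p) - int (J ! p))"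
    using assms(2) by (intro sum_nonneg) auto
  then show ?thesis
    using Nk_diff_same_length[OF assms(1), where k=k] by linarith
qed

lemma Nk_less_pointwise:
  assumes "length L = length J" and "\<forall>p<length J. J ! p \<le> L ! p" and "L \<noteq> J"
  shows "Nk k J < Nk k L"
proof -
  obtain p where p: "p < length J" "L ! p \<noteq> J ! p"
    using assms(1,3) nth_equalityI by metis
  have "(\<Sum>p<length J. 0) < (\<Sum>p<length J. int (L ! p) - int (J ! p))"
  proof (rule sum_strict_mono_ex1)
    show "\<forall>q\<in>{..<length J}. (0::int) \<le> int (L ! q) - int (J ! q)"
      using assms(2) by auto
    show "\<exists>q\<in>{..<length J}. (0::int) < int (L ! q) - int (J ! q)"
      using p assms(2) by (intro bexI[of _ p]) auto
  qed simp
  then show ?thesis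
    using Nk_diff_same_length[OF assms(1), where k=k] by simp
qed

theorem lemma4p16:
  fixes k s t :: nat and J K :: "nat list"
  assumes "k \<le> s" and "s \<le> t"
    and "length J = s" and "length K = t"
    and "sorted_wrt (<) J" and "sorted_wrt (<) K"
    and "\<forall>p<s. K ! (t - s + p) \<ge> J ! p"
  shows "Nk k K \<ge> Nk k J \<and> (K \<noteq> J \<longrightarrow> Nk k K > Nk k J)"
proof -
  define L where "L = drop (t - s) K"
  have len_L: "length L = length J" and J_le_L: "\<forall>p<length J. J ! p \<le> L ! p"
    using assms(2-4,7) by (simp_all add: L_def)
  have L_K: "Nk k L + int (t - s) * int (t - s) \<le> Nk k K"
    unfolding L_def using Nk_drop_le[OF assms(6), of k "t - s"] assms(1,2,4) by simp
  have "Nk k J \<le> Nk k L"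
    using Nk_le_pointwise[OF len_L J_le_L] .
  have "Nk k J < Nk k K" if "K \<noteq> J"
  proof (cases "t = s")
    case True
    then show ?thesis
      using Nk_less_pointwise[OF len_L J_le_L] L_K that by (simp add: L_def)
  next
    case False
    then have "0 < int (t - s) * int (t - s)"
      using assms(2) by simp
    then show ?thesis
      using \<open>Nk k J \<le> Nk k L\<close> L_K by linarith
  qed
  moreover have "Nk k J \<le> Nk k K"
    using \<open>Nk k J \<le> Nk k L\<close> L_K zero_le_square[of "int (t - s)"] by linarith
  ultimately show ?thesis
    by blast
qed

end
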